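(* Over the theory $\mathrm{IKP}-\Delta_0\text{ Bounding}$ (i.e. IKP with the $\Delta_0$ Bounding schema removed), the following three axiom schemes are equivalent: (1) $\Pi$ Persistence; (2) $\Pi$ Uniformity; (3) $\Delta_0$ Uniformity.
   Context: All theories are over intuitionistic first-order logic in the language $\{\in,=\}$. IKP has the axioms: Extensionality, Empty Set, Pairing, Union, Infinity in the form $\exists x\,[0\in x\wedge\forall y\in x\,\exists z\in x\,(z=y\cup\{y\})\wedge\forall y\in x\,(y=0\vee\exists z\in x\; y=z\cup\{z\})]$, the $\in$-Induction schema $\forall x(\forall y\in x\,\phi(y)\to\phi(x))\to\forall x\,\phi(x)$ for all formulas $\phi$, $\Delta_0$ Separation, and $\Delta_0$ Bounding: $\forall x\in A\,\exists y\,\phi(x,y)\to\exists B\,\forall x\in A\,\exists y\in B\,\phi(x,y)$ for $\Delta_0$ $\phi$ (parameters allowed). A $\Delta_0$ formula has only bounded quantifiers. $\Pi$ formulas are the closure of the $\Delta_0$ formulas under $\wedge,\vee$, unbounded $\forall$, and bounded quantifiers $\forall u\in v$, $\exists u\in v$. For a formula $\phi$ and a set $A$, $\phi^{(A)}$ is obtained by bounding every unbounded quantifier of $\phi$ by $A$. $\Pi$ Persistence: $\forall A\,\phi^{(A)}\to\phi$ for every $\Pi$ formula $\phi$. $\Pi$ Uniformity: $\forall B\,\exists x\in A\,\forall y\in B\,\phi(x,y)\to\exists x\in A\,\forall y\,\phi(x,y)$ for every $\Pi$ formula $\phi$ (parameters allowed). $\Delta_0$ Uniformity: the same schema restricted to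 $\Delta_0$ formulas $\phi$. *)

theory Defs
  imports Main
begin

text \<open>Bounded quantifiers are primitive
  constructors: BAll x y p is (forall x in y. p), BEx x y p is (exists x in y. p).
  Their meaning is fixed by logical axioms below (for x different from y).\<close>

datatype fm =
    Mem nat nat
  | Eq nat nat
  | Bot
  | Conj fm fm
  | Disj fm fm
  | Imp fm fm
  | All nat fm
  | Ex nat fm
  | BAll nat nat fm
  | BEx nat nat fm

definition Neg :: "fm \<Rightarrow> fm" where "Neg p = Imp p Bot"
definition Iff :: "fm \<Rightarrow> fm \<Rightarrow> fm" where "Iff p q = Conj (Imp p q) (Imp q p)"

fun fv :: "fm \<Rightarrow> nat set" where
  "fv (Mem x y) = {x, y}"
| "fv (Eq x y) = {x, y}"
| "fv Bot = {}"
| "fv (Conj p q) = fv p \<union> fv q"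
| "fv (Disj p q) = fv p \<union> fv q"
| "fv (Imp p q) = fv p \<union> fv q"
| "fv (All x p) = fv p - {x}"
| "fv (Ex x p) = fv p - {x}"
| "fv (BAll x y p) = insert y (fv p - {x})"
| "fv (BEx x y p) = insert y (fv p - {x})"

fun vars :: "fm \<Rightarrow> nat set" where
  "vars (Mem x y) = {x, y}"
| "vars (Eq x y) = {x, y}"
| "vars Bot = {}"
| "vars (Conj p q) = vars p \<union> vars q"
| "vars (Disj p q) = vars p \<union> vars q"
| "vars (Imp p q) = vars p \<union> vars q"
| "vars (All x p) = insert x (vars p)"
| "vars (Ex x p) = insert x (vars p)"
| "vars (BAll x y p) = insert x (insert y (vars p))"
| "vars (BEx x y p) = insert x (insert y (vars p))"

definition rn :: "nat \<Rightarrow> nat \<Rightarrow> nat \<Rightarrow> nat" where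
  "rn x y v = (if v = x then y else v)"

text \<open>subst p x y: replace the free occurrences of x in p by y (no renaming;
  used only together with the side condition substitutable).\<close>
fun subst :: "fm \<Rightarrow> nat \<Rightarrow> nat \<Rightarrow> fm" where
  "subst (Mem u v) x y = Mem (rn x y u) (rn x y v)"
| "subst (Eq u v) x y = Eq (rn x y u) (rn x y v)"
| "subst Bot x y = Bot"
| "subst (Conj p q) x y = Conj (subst p x y) (subst q x y)"
| "subst (Disj p q) x y = Disj (subst p x y) (subst q x y)"
| "subst (Imp p q) x y = Imp (subst p x y) (subst q x y)"
| "subst (All z p) x y = (if z = x then All z p else All z (subst p x y))"
| "subst (Ex z p) x y = (if z = x then Ex z p else Ex z (subst p x y))"
| "subst (BAll z w p) x y =
     (if z = x then BAll z (rn x y w) p else BAll z (rn x y w) (subst p x y))"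
| "subst (BEx z w p) x y =
     (if z = x then BEx z (rn x y w) p else BEx z (rn x y w) (subst p x y))"

text \<open>substitutable y x p: y is free for x in p.\<close>
fun substitutable :: "nat \<Rightarrow> nat \<Rightarrow> fm \<Rightarrow> bool" where
  "substitutable y x (Mem u v) = True"
| "substitutable y x (Eq u v) = True"
| "substitutable y x Bot = True"
| "substitutable y x (Conj p q) = (substitutable y x p \<and> substitutable y x q)"
| "substitutable y x (Disj p q) = (substitutable y x p \<and> substitutable y x q)"
| "substitutable y x (Imp p q) = (substitutable y x p \<and> substitutable y x q)"
| "substitutable y x (All z p) =
     (z = x \<or> x \<notin> fv p \<or> (z \<noteq> y \<and> substitutable y x p))"
| "substitutable y x (Ex z p) =
     (z = x \<or> x \<notin> fv p \<or> (z \<noteq> y \<and> substitutable y x p))"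
| "substitutable y x (BAll z w p) =
     (z = x \<or> x \<notin> fv p \<or> (z \<noteq> y \<and> substitutable y x p))"
| "substitutable y x (BEx z w p) =
     (z = x \<or> x \<notin> fv p \<or> (z \<noteq> y \<and> substitutable y x p))"

text \<open>prov T p: p is derivable from the set of (possibly open) axioms T.
  Open axioms behave as their universal closures (parameters allowed).\<close>
inductive prov :: "fm set \<Rightarrow> fm \<Rightarrow> bool" where
  ax: "p \<in> T \<Longrightarrow> prov T p"
| K: "prov T (Imp p (Imp q p))"
| S: "prov T (Imp (Imp p (Imp q r)) (Imp (Imp p q) (Imp p r)))"
| conjE1: "prov T (Imp (Conj p q) p)"
| conjE2: "prov T (Imp (Conj p q) q)"
| conjI: "prov T (Imp p (Imp q (Conj p q)))"
| disjI1: "prov T (Imp p (Disj p q))"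
| disjI2: "prov T (Imp q (Disj p q))"
| disjE: "prov T (Imp (Imp p r) (Imp (Imp q r) (Imp (Disj p q) r)))"
| botE: "prov T (Imp Bot p)"
| allE: "substitutable y x p \<Longrightarrow> prov T (Imp (All x p) (subst p x y))"
| exI: "substitutable y x p \<Longrightarrow> prov T (Imp (subst p x y) (Ex x p))"
| ballD: "x \<noteq> y \<Longrightarrow> prov T (Imp (BAll x y p) (All x (Imp (Mem x y) p)))"
| ballI: "x \<noteq> y \<Longrightarrow> prov T (Imp (All x (Imp (Mem x y) p)) (BAll x y p))"
| bexD: "x \<noteq> y \<Longrightarrow> prov T (Imp (BEx x y p) (Ex x (Conj (Mem x y) p)))"
| bexI: "x \<noteq> y \<Longrightarrow> prov T (Imp (Ex x (Conj (Mem x y) p)) (BEx x y p))"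
| eqRefl: "prov T (Eq x x)"
| eqMemL: "prov T (Imp (Eq x y) (Imp (Mem x z) (Mem y z)))"
| eqMemR: "prov T (Imp (Eq x y) (Imp (Mem z x) (Mem z y)))"
| eqEq: "prov T (Imp (Eq x y) (Imp (Eq x z) (Eq y z)))"
| mp: "prov T (Imp p q) \<Longrightarrow> prov T p \<Longrightarrow> prov T q"
| genAll: "prov T (Imp q p) \<Longrightarrow> x \<notin> fv q \<Longrightarrow> prov T (Imp q (All x p))"
| genEx: "prov T (Imp p q) \<Longrightarrow> x \<notin> fv q \<Longrightarrow> prov T (Imp (Ex x p) q)"

definition derives :: "fm set \<Rightarrow> fm set \<Rightarrow> bool" where
  "derives T S = (\<forall>p\<in>S. prov T p)"

inductive Delta0 :: "fm \<Rightarrow> bool" where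
  "Delta0 (Mem x y)"
| "Delta0 (Eq x y)"
| "Delta0 Bot"
| "Delta0 p \<Longrightarrow> Delta0 q \<Longrightarrow> Delta0 (Conj p q)"
| "Delta0 p \<Longrightarrow> Delta0 q \<Longrightarrow> Delta0 (Disj p q)"
| "Delta0 p \<Longrightarrow> Delta0 q \<Longrightarrow> Delta0 (Imp p q)"
| "x \<noteq> y \<Longrightarrow> Delta0 p \<Longrightarrow> Delta0 (BAll x y p)"
| "x \<noteq> y \<Longrightarrow> Delta0 p \<Longrightarrow> Delta0 (BEx x y p)"

inductive PiF :: "fm \<Rightarrow> bool" where
  "Delta0 p \<Longrightarrow> PiF p"
| "PiF p \<Longrightarrow> PiF q \<Longrightarrow> PiF (Conj p q)"
| "PiF p \<Longrightarrow> PiF q \<Longrightarrow> PiF (Disj p q)"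
| "PiF p \<Longrightarrow> PiF (All x p)"
| "x \<noteq> y \<Longrightarrow> PiF p \<Longrightarrow> PiF (BAll x y p)"
| "x \<noteq> y \<Longrightarrow> PiF p \<Longrightarrow> PiF (BEx x y p)"

fun rel :: "nat \<Rightarrow> fm \<Rightarrow> fm" where
  "rel A (Mem x y) = Mem x y"
| "rel A (Eq x y) = Eq x y"
| "rel A Bot = Bot"
| "rel A (Conj p q) = Conj (rel A p) (rel A q)"
| "rel A (Disj p q) = Disj (rel A p) (rel A q)"
| "rel A (Imp p q) = Imp (rel A p) (rel A q)"
| "rel A (All x p) = BAll x A (rel A p)"
| "rel A (Ex x p) = BEx x A (rel A p)"
| "rel A (BAll x y p) = BAll x y (rel A p)"
| "rel A (BEx x y p) = BEx x y (rel A p)"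

definition emptyF :: "nat \<Rightarrow> nat \<Rightarrow> fm" where
  "emptyF y w = BAll w y Bot"

definition succF :: "nat \<Rightarrow> nat \<Rightarrow> nat \<Rightarrow> fm" where
  "succF z y w = Conj (BAll w z (Disj (Mem w y) (Eq w y)))
                      (Conj (BAll w y (Mem w z)) (Mem y z))"

definition Extensionality :: fm where
  "Extensionality = All 0 (All 1 (Imp (All 2 (Iff (Mem 2 0) (Mem 2 1))) (Eq 0 1)))"

definition EmptySet :: fm where
  "EmptySet = Ex 0 (All 1 (Neg (Mem 1 0)))"

definition Pairing :: fm where
  "Pairing = All 0 (All 1 (Ex 2 (Conj (Mem 0 2) (Mem 1 2))))"

definition Union :: fm where
  "Union = All 0 (Ex 1 (BAll 2 0 (BAll 3 2 (Mem 3 1))))"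

definition Infinity :: fm where
  "Infinity = Ex 0 (Conj (BEx 1 0 (emptyF 1 2))
     (Conj (BAll 3 0 (BEx 4 0 (succF 4 3 5)))
           (BAll 3 0 (Disj (emptyF 3 5) (BEx 4 0 (succF 3 4 5))))))"

definition EpsInduction :: "fm set" where
  "EpsInduction = {Imp (All x (Imp (BAll y x (subst p x y)) p)) (All x p) | p x y.
      x \<noteq> y \<and> y \<notin> fv p \<and> substitutable y x p}"

definition Delta0Sep :: "fm set" where
  "Delta0Sep = {All a (Ex b (All x (Iff (Mem x b) (Conj (Mem x a) p)))) | p a b x.
      Delta0 p \<and> distinct [a, b, x] \<and> b \<notin> fv p}"

definition IKP_minus_Bounding :: "fm set" where
  "IKP_minus_Bounding = {Extensionality, EmptySet, Pairing, Union, Infinity}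
     \<union> EpsInduction \<union> Delta0Sep"

definition PiPersistence :: "fm set" where
  "PiPersistence = {Imp (All A (rel A p)) p | p A. PiF p \<and> A \<notin> vars p}"

definition UniformitySchema :: "(fm \<Rightarrow> bool) \<Rightarrow> fm set" where
  "UniformitySchema C = {Imp (All B (BEx x A (BAll y B p))) (BEx x A (All y p)) | p A B x y.
      C p \<and> distinct [A, B, x, y] \<and> B \<notin> fv p}"

definition PiUniformity :: "fm set" where
  "PiUniformity = UniformitySchema PiF"

definition Delta0Uniformity :: "fm set" where
  "Delta0Uniformity = UniformitySchema Delta0"

end

theory Submission
  imports Defs
begin

text \<open>\<Pi> formulas persist downwards under relativization, \<open>\<phi> \<longrightarrow> \<phi>\<^sup>C\<close>, and their
  relativizations are antimonotone in the bounding set: \<open>C \<subseteq> D\<close> and \<open>\<phi>\<^sup>D\<close> give \<open>\<phi>\<^sup>C\<close>.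
  Persistence yields \<Pi> Uniformity because, after pushing the bound \<open>B\<close> inside by
  downward persistence, the premise \<open>\<forall>B. \<exists>x\<in>A. \<forall>y\<in>B. \<phi>\<close> becomes \<open>\<forall>B. \<psi>\<^sup>B\<close> for
  \<open>\<psi> = \<exists>x\<in>A. \<forall>y. \<phi>\<close>.

  Conversely, \<open>\<Delta>\<^sub>0\<close> Uniformity yields Persistence by induction on \<Pi> formulas. For
  \<open>\<forall>x. \<phi>\<close>, every \<open>A\<close> lies in a set \<open>U\<close> that also contains \<open>x\<close>, and \<open>\<phi>\<^sup>U\<close> descends
  to \<open>\<phi>\<^sup>A\<close>. For \<open>\<exists>x\<in>y. \<phi>\<close> and \<open>\<phi> \<or> \<psi>\<close>, evaluating the hypothesis at a set
  \<open>U \<supseteq> \<Union>B\<close> gives a witness that works for all members of \<open>B\<close>, and \<open>\<Delta>\<^sub>0\<close> Uniformity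
  makes it work for all sets; for the disjunction the witness ranges over a set
  containing an empty and an inhabited element, which records the chosen disjunct.
  Finally, \<open>\<Delta>\<^sub>0\<close> Uniformity is a special case of \<Pi> Uniformity.\<close>

lemma finite_vars: "finite (vars p)"
  by (induct p) auto

lemma fv_subset_vars: "fv p \<subseteq> vars p"
  by (induct p) auto

lemma notin_vars_notin_fv [simp]: "y \<notin> vars p \<Longrightarrow> y \<notin> fv p"
  using fv_subset_vars by blast

lemma subst_self [simp]: "subst p x x = p"
  by (induct p) (auto simp: rn_def)

lemma substitutable_self [simp]: "substitutable x x p"
  by (induct p) auto

lemma subst_notin_fv: "x \<notin> fv p \<Longrightarrow> subst p x y = p"
  by (induct p) (auto simp: rn_def)

lemma substitutable_fresh: "y \<notin> vars p \<Longrightarrow> substitutable y x p"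
  by (induct p) auto

lemma subst_subst_fresh: "y \<notin> vars p \<Longrightarrow> subst (subst p x y) y x = p"
  by (induct p) (auto simp: rn_def subst_notin_fv)

lemma fv_subst: "x \<noteq> y \<Longrightarrow> x \<notin> fv (subst p x y)"
  by (induct p) (auto simp: rn_def)

lemma substitutable_subst_fresh: "y \<notin> vars p \<Longrightarrow> substitutable x y (subst p x y)"
  by (induct p) auto

lemma obtain_fresh:
  fixes S :: "nat set"
  assumes "finite S"
  obtains N where "\<forall>m\<in>S. m < N"
  using assms finite_nat_set_iff_bounded by blast

section \<open>Natural deduction on top of the Hilbert calculus\<close>

definition Top :: fm where "Top = Imp Bot Bot"

lemma Top_simps [simp]: "fv Top = {}" "vars Top = {}" "subst Top x y = Top" "substitutable y x Top"
  by (simp_all add: Top_def)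

lemma Delta0_Top: "Delta0 Top"
  unfolding Top_def by (intro Delta0.intros)

lemma prov_weaken: "prov T q \<Longrightarrow> prov T (Imp p q)"
  by (rule prov.mp[OF prov.K])

lemma prov_imp_refl: "prov T (Imp p p)"
  by (rule prov.mp[OF prov.mp[OF prov.S[of T p "Imp p p" p] prov.K] prov.K])

lemma prov_Top: "prov T Top"
  unfolding Top_def by (rule prov_imp_refl)

lemma prov_imp_trans:
  assumes "prov T (Imp p q)" and "prov T (Imp q r)"
  shows "prov T (Imp p r)"
  by (rule prov.mp[OF prov.mp[OF prov.S prov_weaken[OF assms(2)]] assms(1)])

fun conjs :: "fm list \<Rightarrow> fm" where
  "conjs [] = Top"
| "conjs (p # \<Gamma>) = Conj (conjs \<Gamma>) p"

lemma fv_conjs [simp]: "fv (conjs \<Gamma>) = (\<Union>q\<in>set \<Gamma>. fv q)"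
  by (induct \<Gamma>) auto

definition entails :: "fm set \<Rightarrow> fm list \<Rightarrow> fm \<Rightarrow> bool" where
  "entails T \<Gamma> p \<longleftrightarrow> prov T (Imp (conjs \<Gamma>) p)"

lemma entails_theorem: "prov T p \<Longrightarrow> entails T \<Gamma> p"
  unfolding entails_def by (rule prov_weaken)

lemma entails_mp: "entails T \<Gamma> (Imp p q) \<Longrightarrow> entails T \<Gamma> p \<Longrightarrow> entails T \<Gamma> q"
  unfolding entails_def by (rule prov.mp[OF prov.mp[OF prov.S]])

lemma entails_mp_theorem: "prov T (Imp p q) \<Longrightarrow> entails T \<Gamma> p \<Longrightarrow> entails T \<Gamma> q"
  by (rule entails_mp[OF entails_theorem])

lemma entails_assume: "p \<in> set \<Gamma> \<Longrightarrow> entails T \<Gamma> p"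
proof (induction \<Gamma>)
  case (Cons q \<Gamma>)
  show ?case
  proof (cases "p = q")
    case True
    then show ?thesis by (simp add: entails_def prov.conjE2)
  next
    case False
    with Cons have "prov T (Imp (conjs \<Gamma>) p)" by (simp add: entails_def)
    then show ?thesis unfolding entails_def by (simp add: prov_imp_trans[OF prov.conjE1])
  qed
qed simp

lemma entails_conjI: "entails T \<Gamma> p \<Longrightarrow> entails T \<Gamma> q \<Longrightarrow> entails T \<Gamma> (Conj p q)"
  by (rule entails_mp[OF entails_mp_theorem[OF prov.conjI]])

lemma entails_conjD1: "entails T \<Gamma> (Conj p q) \<Longrightarrow> entails T \<Gamma> p"
  by (rule entails_mp_theorem[OF prov.conjE1])

lemma entails_conjD2: "entails T \<Gamma> (Conj p q) \<Longrightarrow> entails T \<Gamma> q"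
  by (rule entails_mp_theorem[OF prov.conjE2])

lemma entails_impI:
  assumes "entails T (p # \<Gamma>) q"
  shows "entails T \<Gamma> (Imp p q)"
proof -
  have "entails T \<Gamma> (Imp p (Imp (conjs (p # \<Gamma>)) q))"
    using assms unfolding entails_def by (rule prov_weaken[OF prov_weaken])
  moreover have "entails T \<Gamma> (Imp p (conjs (p # \<Gamma>)))"
    by (simp add: entails_def prov.conjI)
  ultimately show ?thesis
    by (rule entails_mp[OF entails_mp_theorem[OF prov.S]])
qed

lemma entails_trans:
  assumes "entails T \<Gamma> q" and "\<And>p. p \<in> set \<Gamma> \<Longrightarrow> entails T \<Delta> p"
  shows "entails T \<Delta> q"
proof -
  have "entails T \<Delta> (conjs \<Gamma>)"
    using assms(2) by (induction \<Gamma>) (auto intro: entails_conjI entails_theorem prov_Top)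
  then show ?thesis
    using assms(1) unfolding entails_def by (rule prov_imp_trans)
qed

lemma entails_mono: "entails T \<Gamma> p \<Longrightarrow> set \<Gamma> \<subseteq> set \<Delta> \<Longrightarrow> entails T \<Delta> p"
  by (rule entails_trans) (auto intro: entails_assume)

lemma entails_cut: "entails T [p] q \<Longrightarrow> entails T \<Gamma> p \<Longrightarrow> entails T \<Gamma> q"
  by (rule entails_trans) auto

lemma entails_cut2:
  "entails T [p, q] r \<Longrightarrow> entails T \<Gamma> p \<Longrightarrow> entails T \<Gamma> q \<Longrightarrow> entails T \<Gamma> r"
  by (rule entails_trans) auto

lemma prov_of_entails: "entails T [] p \<Longrightarrow> prov T p"
  unfolding entails_def using prov_Top by (auto intro: prov.mp)

lemma prov_imp_of_entails:
  assumes "entails T [p] q"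
  shows "prov T (Imp p q)"
proof -
  have "prov T (Imp p (conjs [p]))"
    using prov.mp[OF prov.conjI prov_Top] by simp
  then show ?thesis
    using assms unfolding entails_def by (rule prov_imp_trans)
qed

lemma prov_imp_swap:
  assumes "prov T (Imp p (Imp q r))"
  shows "prov T (Imp q (Imp p r))"
proof -
  have "entails T [p, q] r"
    by (rule entails_mp[OF entails_mp_theorem[OF assms]]) (simp_all add: entails_assume)
  then show ?thesis
    by (intro prov_imp_of_entails entails_impI)
qed

lemma entails_disjI1: "entails T \<Gamma> p \<Longrightarrow> entails T \<Gamma> (Disj p q)"
  by (rule entails_mp_theorem[OF prov.disjI1])

lemma entails_disjI2: "entails T \<Gamma> q \<Longrightarrow> entails T \<Gamma> (Disj p q)"
  by (rule entails_mp_theorem[OF prov.disjI2])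

lemma entails_disjE:
  assumes "entails T \<Gamma> (Disj p q)" and "entails T (p # \<Gamma>) r" and "entails T (q # \<Gamma>) r"
  shows "entails T \<Gamma> r"
  using entails_mp_theorem[OF prov.disjE entails_impI[OF assms(2)]] entails_impI[OF assms(3)] assms(1)
  by (rule entails_mp[OF entails_mp])

lemma entails_disj_mono:
  assumes "entails T \<Gamma> (Disj p q)" and "prov T (Imp p p')" and "prov T (Imp q q')"
  shows "entails T \<Gamma> (Disj p' q')"
proof (rule entails_disjE[OF assms(1)])
  show "entails T (p # \<Gamma>) (Disj p' q')"
    by (rule entails_disjI1[OF entails_mp_theorem[OF assms(2) entails_assume]]) simp
  show "entails T (q # \<Gamma>) (Disj p' q')"
    by (rule entails_disjI2[OF entails_mp_theorem[OF assms(3) entails_assume]]) simp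
qed

lemma entails_botE: "entails T \<Gamma> Bot \<Longrightarrow> entails T \<Gamma> r"
  by (rule entails_mp_theorem[OF prov.botE])

lemma entails_allE:
  "entails T \<Gamma> (All x p) \<Longrightarrow> substitutable y x p \<Longrightarrow> entails T \<Gamma> (subst p x y)"
  by (rule entails_mp_theorem[OF prov.allE])

lemma entails_spec: "entails T \<Gamma> (All x p) \<Longrightarrow> entails T \<Gamma> p"
  using entails_allE[of T \<Gamma> x p x] by simp

lemma entails_allI: "entails T \<Gamma> p \<Longrightarrow> \<forall>q\<in>set \<Gamma>. x \<notin> fv q \<Longrightarrow> entails T \<Gamma> (All x p)"
  unfolding entails_def by (rule prov.genAll) auto

lemma entails_exI:
  "entails T \<Gamma> (subst p x y) \<Longrightarrow> substitutable y x p \<Longrightarrow> entails T \<Gamma> (Ex x p)"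
  by (rule entails_mp_theorem[OF prov.exI])

lemma entails_exE:
  assumes "entails T \<Gamma> (Ex x p)" and "entails T (p # \<Gamma>) r"
    and "\<forall>q\<in>set \<Gamma>. x \<notin> fv q" and "x \<notin> fv r"
  shows "entails T \<Gamma> r"
proof -
  have "prov T (Imp p (Imp (conjs \<Gamma>) r))"
    using entails_impI[OF assms(2)] unfolding entails_def by (rule prov_imp_swap)
  then have "prov T (Imp (Ex x p) (Imp (conjs \<Gamma>) r))"
    by (rule prov.genEx) (use assms(3,4) in simp)
  then have "entails T \<Gamma> (Imp (conjs \<Gamma>) r)"
    using assms(1) by (rule entails_mp_theorem)
  then show ?thesis
    by (rule entails_mp) (simp add: entails_def prov_imp_refl)
qed

lemma entails_ballE:
  assumes "entails T \<Gamma> (BAll x y p)" and "entails T \<Gamma> (Mem z y)"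
    and "x \<noteq> y" and "substitutable z x p"
  shows "entails T \<Gamma> (subst p x z)"
proof -
  have "entails T \<Gamma> (subst (Imp (Mem x y) p) x z)"
    by (rule entails_allE[OF entails_mp_theorem[OF prov.ballD[OF assms(3)] assms(1)]])
      (simp add: assms(4))
  then show ?thesis
    using assms(2,3) by (simp add: rn_def entails_mp)
qed

lemma entails_bspec:
  "entails T \<Gamma> (BAll x y p) \<Longrightarrow> entails T \<Gamma> (Mem x y) \<Longrightarrow> x \<noteq> y \<Longrightarrow> entails T \<Gamma> p"
  using entails_ballE[of T \<Gamma> x y p x] by simp

lemma entails_ballI:
  "entails T (Mem x y # \<Gamma>) p \<Longrightarrow> \<forall>q\<in>set \<Gamma>. x \<notin> fv q \<Longrightarrow> x \<noteq> y
    \<Longrightarrow> entails T \<Gamma> (BAll x y p)"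
  by (rule entails_mp_theorem[OF prov.ballI entails_allI[OF entails_impI]])

lemma entails_bexI:
  assumes "entails T \<Gamma> (Mem z y)" and "entails T \<Gamma> (subst p x z)"
    and "x \<noteq> y" and "substitutable z x p"
  shows "entails T \<Gamma> (BEx x y p)"
proof -
  have "entails T \<Gamma> (subst (Conj (Mem x y) p) x z)"
    using entails_conjI[OF assms(1,2)] assms(3) by (simp add: rn_def)
  then show ?thesis
    by (rule entails_mp_theorem[OF prov.bexI[OF assms(3)] entails_exI]) (simp add: assms(4))
qed

lemma entails_bexI_self:
  "entails T \<Gamma> p \<Longrightarrow> entails T \<Gamma> (Mem x y) \<Longrightarrow> x \<noteq> y \<Longrightarrow> entails T \<Gamma> (BEx x y p)"
  using entails_bexI[of T \<Gamma> x y p x] by simp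

lemma entails_bexE:
  assumes "entails T \<Gamma> (BEx x y p)" and "entails T (p # Mem x y # \<Gamma>) r"
    and "\<forall>q\<in>set \<Gamma>. x \<notin> fv q" and "x \<notin> fv r" and "x \<noteq> y"
  shows "entails T \<Gamma> r"
proof (rule entails_exE[OF entails_mp_theorem[OF prov.bexD[OF assms(5)] assms(1)] _ assms(3,4)])
  show "entails T (Conj (Mem x y) p # \<Gamma>) r"
  proof (rule entails_trans[OF assms(2)])
    fix q
    have "entails T (Conj (Mem x y) p # \<Gamma>) (Conj (Mem x y) p)"
      by (simp add: entails_assume)
    then show "q \<in> set (p # Mem x y # \<Gamma>) \<Longrightarrow> entails T (Conj (Mem x y) p # \<Gamma>) q"
      by (auto intro: entails_assume entails_conjD1 entails_conjD2)
  qed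
qed

lemma prov_subst: "prov T p \<Longrightarrow> substitutable y x p \<Longrightarrow> prov T (subst p x y)"
  by (rule prov_of_entails[OF entails_allE[OF entails_allI[OF entails_theorem]]]) simp_all

lemma entails_allE_fresh: "entails T \<Gamma> (All x p) \<Longrightarrow> y \<notin> vars p \<Longrightarrow> entails T \<Gamma> (subst p x y)"
  by (rule entails_allE[OF _ substitutable_fresh])

lemma entails_Ex_rename:
  assumes "entails T \<Gamma> (Ex x p)" and "y \<notin> vars p"
  shows "entails T \<Gamma> (Ex y (subst p x y))"
proof -
  have "prov T (Imp (subst (subst p x y) y x) (Ex y (subst p x y)))"
    by (rule prov.exI) (rule substitutable_subst_fresh[OF assms(2)])
  then have "prov T (Imp p (Ex y (subst p x y)))"
    by (simp add: subst_subst_fresh[OF assms(2)])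
  then have "prov T (Imp (Ex x p) (Ex y (subst p x y)))"
    by (rule prov.genEx) (cases "x = y"; simp add: fv_subst)
  then show ?thesis
    using assms(1) by (rule entails_mp_theorem)
qed

section \<open>Relativization of \<open>\<Pi>\<close> formulas\<close>

lemma rel_Delta0: "Delta0 p \<Longrightarrow> rel A p = p"
  by (induct rule: Delta0.induct) auto

lemma vars_rel: "vars (rel A p) \<subseteq> insert A (vars p)"
  by (induct p) auto

lemma fv_rel_notin [simp]: "m \<notin> vars p \<Longrightarrow> m \<noteq> A \<Longrightarrow> m \<notin> fv (rel A p)"
  using vars_rel fv_subset_vars by blast

lemma subst_rel: "A \<notin> vars p \<Longrightarrow> subst (rel A p) A U = rel U p"
  by (induct p) (auto simp: rn_def)

lemma Delta0_rel: "PiF p \<Longrightarrow> A \<notin> vars p \<Longrightarrow> Delta0 (rel A p)"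
  by (induct rule: PiF.induct) (auto simp: rel_Delta0 intro: Delta0.intros)

lemma entails_rel_inst:
  assumes "entails T \<Gamma> (All A (rel A p))" and "A \<notin> vars p" and "U \<notin> vars p"
  shows "entails T \<Gamma> (rel U p)"
proof -
  have "substitutable U A (rel A p)"
    using assms(3) vars_rel by (cases "U = A") (auto intro: substitutable_fresh)
  from entails_allE[OF assms(1) this] show ?thesis
    by (simp add: subst_rel assms(2))
qed

lemma entails_Pi_rel:
  assumes "entails T \<Gamma> p" and "PiF p" and "C \<notin> vars p"
  shows "entails T \<Gamma> (rel C p)"
proof -
  have "entails T [p] (rel C p)"
    using assms(2,3)
  proof (induction rule: PiF.induct)
    case (1 p)
    then show ?case by (simp add: rel_Delta0 entails_assume)
  next
    case (2 p q)
    then have IH: "entails T [p] (rel C p)" "entails T [q] (rel C q)" by simp_all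
    have "entails T [Conj p q] (Conj p q)" by (simp add: entails_assume)
    then show ?case
      using entails_cut[OF IH(1) entails_conjD1] entails_cut[OF IH(2) entails_conjD2]
      by (simp add: entails_conjI)
  next
    case (3 p q)
    then have "prov T (Imp p (rel C p))" "prov T (Imp q (rel C q))"
      by (simp_all add: prov_imp_of_entails)
    then show ?case
      using entails_disj_mono[OF entails_assume] by simp
  next
    case (4 p x)
    then have IH: "entails T [p] (rel C p)" by simp
    have "entails T [Mem x C, All x p] p"
      by (rule entails_spec[OF entails_assume]) simp
    then have "entails T [Mem x C, All x p] (rel C p)"
      by (rule entails_cut[OF IH])
    then show ?case
      using 4 by (simp add: entails_ballI)
  next
    case (5 x y p)
    then have IH: "entails T [p] (rel C p)" by simp
    have "entails T [Mem x y, BAll x y p] p"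
      by (rule entails_bspec) (use 5 in \<open>simp_all add: entails_assume\<close>)
    then have "entails T [Mem x y, BAll x y p] (rel C p)"
      by (rule entails_cut[OF IH])
    then show ?case
      using 5 by (simp add: entails_ballI)
  next
    case (6 x y p)
    then have IH: "entails T [p] (rel C p)" by simp
    let ?\<Delta> = "[p, Mem x y, BEx x y p]"
    have "entails T ?\<Delta> (rel C p)"
      by (rule entails_cut[OF IH entails_assume]) simp
    then have "entails T ?\<Delta> (BEx x y (rel C p))"
      by (rule entails_bexI_self) (use 6 in \<open>simp_all add: entails_assume\<close>)
    from entails_bexE[OF entails_assume this] show ?case
      using 6 by simp
  qed
  then show ?thesis
    using assms(1) by (rule entails_cut)
qed

lemma entails_rel_antimono:
  assumes "entails T \<Gamma> (BAll w C (Mem w D))" and "entails T \<Gamma> (rel D p)"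
    and "PiF p" and "C \<notin> vars p" and "D \<notin> vars p" and "w \<noteq> C" and "w \<noteq> D"
  shows "entails T \<Gamma> (rel C p)"
proof -
  let ?S = "BAll w C (Mem w D)"
  have "entails T [rel D p, ?S] (rel C p)"
    using assms(3-5)
  proof (induction rule: PiF.induct)
    case (1 p)
    then show ?case by (simp add: rel_Delta0 entails_assume)
  next
    case (2 p q)
    then have IH: "entails T [rel D p, ?S] (rel C p)" "entails T [rel D q, ?S] (rel C q)"
      by simp_all
    let ?\<Delta> = "[Conj (rel D p) (rel D q), ?S]"
    have "entails T ?\<Delta> (Conj (rel D p) (rel D q))" "entails T ?\<Delta> ?S"
      by (simp_all add: entails_assume)
    then show ?case
      using entails_cut2[OF IH(1) entails_conjD1] entails_cut2[OF IH(2) entails_conjD2]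
      by (simp add: entails_conjI)
  next
    case (3 p q)
    then have IH: "entails T [rel D p, ?S] (rel C p)" "entails T [rel D q, ?S] (rel C q)"
      by simp_all
    show ?case
      unfolding rel.simps
    proof (rule entails_disjE[OF entails_assume])
      show "entails T [rel D p, Disj (rel D p) (rel D q), ?S] (Disj (rel C p) (rel C q))"
        using entails_cut2[OF IH(1) entails_assume entails_assume] by (simp add: entails_disjI1)
      show "entails T [rel D q, Disj (rel D p) (rel D q), ?S] (Disj (rel C p) (rel C q))"
        using entails_cut2[OF IH(2) entails_assume entails_assume] by (simp add: entails_disjI2)
    qed simp
  next
    case (4 p x)
    then have IH: "entails T [rel D p, ?S] (rel C p)" by simp
    let ?\<Delta> = "[Mem x C, BAll x D (rel D p), ?S]"
    have "entails T ?\<Delta> (subst (Mem w D) w x)"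
      using 4 assms(6) by (intro entails_ballE[where y = C]) (simp_all add: entails_assume)
    then have "entails T ?\<Delta> (Mem x D)"
      using assms(7) by (simp add: rn_def)
    then have "entails T ?\<Delta> (rel D p)"
      using 4 entails_bspec[where \<Gamma> = ?\<Delta> and x = x and y = D and p = "rel D p"]
      by (simp add: entails_assume)
    then have "entails T ?\<Delta> (rel C p)"
      by (rule entails_cut2[OF IH _ entails_assume]) simp
    then show ?case
      using 4 entails_ballI[where \<Gamma> = "[BAll x D (rel D p), ?S]" and x = x and y = C] by simp
  next
    case (5 x y p)
    then have IH: "entails T [rel D p, ?S] (rel C p)" by simp
    let ?\<Delta> = "[Mem x y, BAll x y (rel D p), ?S]"
    have "entails T ?\<Delta> (rel D p)"
      using 5 entails_bspec[where \<Gamma> = ?\<Delta> and x = x and y = y and p = "rel D p"]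
      by (simp add: entails_assume)
    then have "entails T ?\<Delta> (rel C p)"
      by (rule entails_cut2[OF IH _ entails_assume]) simp
    then show ?case
      using 5 entails_ballI[where \<Gamma> = "[BAll x y (rel D p), ?S]" and x = x and y = y] by simp
  next
    case (6 x y p)
    then have IH: "entails T [rel D p, ?S] (rel C p)" by simp
    let ?\<Delta> = "[rel D p, Mem x y, BEx x y (rel D p), ?S]"
    have "entails T ?\<Delta> (rel C p)"
      by (rule entails_cut2[OF IH entails_assume entails_assume]) simp_all
    then have "entails T ?\<Delta> (BEx x y (rel C p))"
      by (rule entails_bexI_self) (use 6 in \<open>simp_all add: entails_assume\<close>)
    from entails_bexE[OF entails_assume this] show ?case
      using 6 by simp
  qed
  then show ?thesis
    using assms(2,1) by (rule entails_cut2)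
qed

section \<open>\<open>\<Pi>\<close> Persistence implies \<open>\<Pi>\<close> Uniformity\<close>

lemma Pi_uniformity_of_persistence:
  assumes "PiPersistence \<subseteq> T" and "PiF p" and "distinct [A, B, x, y]" and "B \<notin> fv p"
  shows "prov T (Imp (All B (BEx x A (BAll y B p))) (BEx x A (All y p)))"
proof -
  obtain N where "\<forall>m\<in>{A, B, x, y} \<union> vars p. m < N"
    by (meson obtain_fresh finite_vars finite.emptyI finite.insertI finite_UnI)
  then have N: "N \<notin> vars p" "N \<noteq> A" "N \<noteq> B" "N \<noteq> x" "N \<noteq> y" "x \<noteq> N" "y \<noteq> N"
    by auto
  let ?H = "All B (BEx x A (BAll y B p))"
  let ?\<Delta> = "[Mem y N, BAll y N p, Mem x A, ?H]"
  have "entails T [?H] (subst (BEx x A (BAll y B p)) B N)"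
    by (rule entails_allE[OF entails_assume]) (simp_all add: N substitutable_fresh)
  then have "entails T [?H] (BEx x A (BAll y N p))"
    using assms(3,4) by (simp add: rn_def subst_notin_fv)
  moreover have "entails T ?\<Delta> p"
    using entails_bspec[where \<Gamma> = ?\<Delta> and x = y and y = N and p = p] N
    by (simp add: entails_assume)
  then have "entails T ?\<Delta> (rel N p)"
    by (rule entails_Pi_rel) (use assms(2) N in simp_all)
  then have ball: "entails T [BAll y N p, Mem x A, ?H] (BAll y N (rel N p))"
    by (rule entails_ballI) (use assms(3,4) N in auto)
  have "entails T [BAll y N p, Mem x A, ?H] (BEx x A (BAll y N (rel N p)))"
    by (rule entails_bexI[where z = x]) (use ball assms(3) in \<open>simp_all add: entails_assume\<close>)
  ultimately have "entails T [?H] (BEx x A (BAll y N (rel N p)))"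
    by (rule entails_bexE) (use assms(3,4) in auto)
  then have "entails T [?H] (All N (rel N (BEx x A (All y p))))"
    by (simp, rule entails_allI) (use assms(3,4) N in auto)
  moreover have "Imp (All N (rel N (BEx x A (All y p)))) (BEx x A (All y p)) \<in> PiPersistence"
  proof -
    have "PiF (BEx x A (All y p))" and "N \<notin> vars (BEx x A (All y p))"
      using assms N by (auto intro: PiF.intros)
    then show ?thesis unfolding PiPersistence_def by blast
  qed
  ultimately show ?thesis
    using assms(1) by (auto intro: prov_imp_of_entails entails_mp_theorem[OF prov.ax])
qed

section \<open>Sets provided by Empty Set, Pairing and Union\<close>

definition inhabitedF :: "nat \<Rightarrow> nat \<Rightarrow> fm" where
  "inhabitedF X t = BEx t X Top"

lemma fv_emptyF [simp]: "t \<noteq> X \<Longrightarrow> fv (emptyF X t) = {X}"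
  and fv_inhabitedF [simp]: "t \<noteq> X \<Longrightarrow> fv (inhabitedF X t) = {X}"
  by (auto simp: emptyF_def inhabitedF_def)

locale basic_set_theory =
  fixes T :: "fm set"
  assumes EmptySet_ax: "EmptySet \<in> T" and Pairing_ax: "Pairing \<in> T" and Union_ax: "Union \<in> T"
begin

text \<open>The axioms are stated with fixed variable names. They are first instantiated with
  fresh variables, so that renaming to the requested names cannot be captured by a
  binder.\<close>

lemma empty_set_exists:
  assumes "e \<noteq> t"
  shows "prov T (Ex e (emptyF e t))"
proof -
  obtain N where N: "\<forall>m\<in>{0, 1, e, t}. m < N"
    by (meson obtain_fresh finite.emptyI finite.insertI)
  have "entails T [] (Ex 0 (All 1 (Imp (Mem 1 0) Bot)))"
    using EmptySet_ax unfolding EmptySet_def Neg_def by (rule entails_theorem[OF prov.ax])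
  from entails_Ex_rename[OF this, of N]
  have ex: "entails T [] (Ex N (All 1 (Imp (Mem 1 N) Bot)))"
    using N by (simp add: rn_def)
  let ?\<Gamma> = "[Mem t N, All 1 (Imp (Mem 1 N) Bot)]"
  have "entails T ?\<Gamma> (subst (Imp (Mem 1 N) Bot) 1 t)"
    by (rule entails_allE[OF entails_assume]) simp_all
  then have "entails T ?\<Gamma> Bot"
    using N by (simp add: rn_def entails_mp entails_assume)
  then have empty: "entails T [All 1 (Imp (Mem 1 N) Bot)] (emptyF N t)"
    unfolding emptyF_def by (rule entails_ballI) (use N in auto)
  have "entails T [All 1 (Imp (Mem 1 N) Bot)] (Ex e (emptyF e t))"
    by (rule entails_exI[where y = N]) (use empty assms in \<open>simp_all add: emptyF_def rn_def\<close>)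
  then show ?thesis
    by (rule prov_of_entails[OF entails_exE[OF ex]]) (auto simp: emptyF_def)
qed

lemma pair_exists:
  assumes "c \<noteq> u" and "c \<noteq> v"
  shows "prov T (Ex c (Conj (Mem u c) (Mem v c)))"
proof -
  obtain N where N: "\<forall>m\<in>{0, 1, 2, u, v, c}. m < N"
    by (meson obtain_fresh finite.emptyI finite.insertI)
  have "entails T [] (All 0 (All 1 (Ex 2 (Conj (Mem 0 2) (Mem 1 2)))))"
    using Pairing_ax unfolding Pairing_def by (rule entails_theorem[OF prov.ax])
  from entails_allE_fresh[OF this, of N]
  have "entails T [] (All 1 (Ex 2 (Conj (Mem N 2) (Mem 1 2))))"
    using N by (simp add: rn_def)
  from entails_allE_fresh[OF this, of "N + 1"]
  have ex: "entails T [] (Ex 2 (Conj (Mem N 2) (Mem (N + 1) 2)))"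
    using N by (simp add: rn_def)
  have "entails T [Conj (Mem N 2) (Mem (N + 1) 2)] (Ex c (Conj (Mem N c) (Mem (N + 1) c)))"
    by (rule entails_exI[where y = 2]) (use N in \<open>simp_all add: rn_def entails_assume\<close>)
  then have "prov T (Ex c (Conj (Mem N c) (Mem (N + 1) c)))"
    by (rule prov_of_entails[OF entails_exE[OF ex]]) (use N in auto)
  from prov_subst[OF this, of u N]
  have "prov T (Ex c (Conj (Mem u c) (Mem (N + 1) c)))"
    using assms N by (simp add: rn_def)
  from prov_subst[OF this, of v "N + 1"] show ?thesis
    using assms N by (simp add: rn_def)
qed

lemma union_exists:
  assumes "U \<noteq> b" and "U \<noteq> v" and "U \<noteq> w" and "v \<noteq> b" and "w \<noteq> v"
  shows "prov T (Ex U (BAll v b (BAll w v (Mem w U))))"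
proof -
  obtain N where N: "\<forall>m\<in>{0, 1, 2, 3, U, v, w, b}. m < N"
    by (meson obtain_fresh finite.emptyI finite.insertI)
  let ?M = "N + 1" and ?K = "N + 2" and ?L = "N + 3"
  let ?B = "BAll 2 N (BAll 3 2 (Mem 3 ?M))" and ?B' = "BAll ?K N (BAll ?L ?K (Mem ?L ?M))"
  have "entails T [] (All 0 (Ex 1 (BAll 2 0 (BAll 3 2 (Mem 3 1)))))"
    using Union_ax unfolding Union_def by (rule entails_theorem[OF prov.ax])
  from entails_allE_fresh[OF this, of N]
  have "entails T [] (Ex 1 (BAll 2 N (BAll 3 2 (Mem 3 1))))"
    using N by (simp add: rn_def)
  from entails_Ex_rename[OF this, of ?M]
  have ex: "entails T [] (Ex ?M ?B)"
    using N by (simp add: rn_def)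
  let ?\<Gamma> = "[Mem ?L ?K, Mem ?K N, ?B]"
  have "entails T ?\<Gamma> (subst (BAll 3 2 (Mem 3 ?M)) 2 ?K)"
    by (rule entails_ballE[OF entails_assume entails_assume]) (use N in auto)
  then have "entails T ?\<Gamma> (BAll 3 ?K (Mem 3 ?M))"
    using N by (simp add: rn_def)
  then have "entails T ?\<Gamma> (subst (Mem 3 ?M) 3 ?L)"
    by (rule entails_ballE[OF _ entails_assume]) (use N in auto)
  then have "entails T [?B] ?B'"
    using N by (simp add: rn_def, intro entails_ballI) auto
  moreover let ?\<Delta> = "[Mem w v, Mem v N, ?B']"
  have "entails T ?\<Delta> (subst (BAll ?L ?K (Mem ?L ?M)) ?K v)"
    by (rule entails_ballE[OF entails_assume entails_assume]) (use N assms in auto)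
  then have "entails T ?\<Delta> (BAll ?L v (Mem ?L ?M))"
    using N by (simp add: rn_def)
  then have "entails T ?\<Delta> (subst (Mem ?L ?M) ?L w)"
    by (rule entails_ballE[OF _ entails_assume]) (use N assms in auto)
  then have "entails T [?B'] (BAll v N (BAll w v (Mem w ?M)))"
    using N assms by (simp add: rn_def, intro entails_ballI) auto
  ultimately have members: "entails T [?B] (BAll v N (BAll w v (Mem w ?M)))"
    by (rule entails_cut[rotated])
  have "entails T [?B] (Ex U (BAll v N (BAll w v (Mem w U))))"
    by (rule entails_exI[where y = ?M]) (use members assms N in \<open>simp_all add: rn_def\<close>)
  then have "prov T (Ex U (BAll v N (BAll w v (Mem w U))))"
    by (rule prov_of_entails[OF entails_exE[OF ex]]) (use N in auto)
  from prov_subst[OF this, of b N] show ?thesis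
    using assms N by (simp add: rn_def)
qed

lemma superset_exists:
  assumes "U \<noteq> x" and "U \<noteq> A" and "w \<noteq> A" and "w \<noteq> U"
  shows "prov T (Ex U (Conj (BAll w A (Mem w U)) (Mem x U)))"
proof -
  obtain N where N: "\<forall>m\<in>{x, A, U, w}. m < N"
    by (meson obtain_fresh finite.emptyI finite.insertI)
  let ?c = N and ?d = "N + 1" and ?v = "N + 2"
  let ?goal = "Ex U (Conj (BAll w A (Mem w U)) (Mem x U))"
  let ?SU = "BAll ?v ?d (BAll w ?v (Mem w U))"
  let ?c_def = "Conj (Mem x ?c) (Mem x ?c)" and ?d_def = "Conj (Mem A ?d) (Mem ?c ?d)"
  have union: "prov T (Ex U ?SU)"
    using N assms by (intro union_exists) auto
  have pair_d: "prov T (Ex ?d ?d_def)" and pair_c: "prov T (Ex ?c ?c_def)"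
    using N by (auto intro: pair_exists)
  let ?\<Gamma> = "[?SU, ?d_def, ?c_def]"
  have d: "entails T ?\<Gamma> ?d_def"
    by (simp add: entails_assume)
  have "entails T ?\<Gamma> (subst (BAll w ?v (Mem w U)) ?v A)"
    by (rule entails_ballE[OF entails_assume entails_conjD1[OF d]]) (use N assms in auto)
  then have A_sub: "entails T ?\<Gamma> (BAll w A (Mem w U))"
    using N assms by (simp add: rn_def)
  have "entails T ?\<Gamma> (subst (BAll w ?v (Mem w U)) ?v ?c)"
    by (rule entails_ballE[OF entails_assume entails_conjD2[OF d]]) (use N assms in auto)
  then have "entails T ?\<Gamma> (BAll w ?c (Mem w U))"
    using N assms by (simp add: rn_def)
  then have "entails T ?\<Gamma> (subst (Mem w U) w x)"
    by (rule entails_ballE[OF _ entails_conjD1[OF entails_assume]]) (use N assms in auto)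
  then have "entails T ?\<Gamma> (Conj (BAll w A (Mem w U)) (Mem x U))"
    using A_sub assms by (simp add: rn_def entails_conjI)
  then have "entails T ?\<Gamma> ?goal"
    using entails_exI[where y = U] by simp
  with union have "entails T [?d_def, ?c_def] ?goal"
    by (rule entails_exE[OF entails_theorem]) (use N assms in auto)
  with pair_d have "entails T [?c_def] ?goal"
    by (rule entails_exE[OF entails_theorem]) (use N in auto)
  with pair_c show ?thesis
    by (rule prov_of_entails[OF entails_exE[OF entails_theorem]]) (use N in auto)
qed

lemma zero_one_exists:
  assumes "distinct [a, X, t]"
  shows "prov T (Ex a (Conj (BEx X a (emptyF X t)) (BEx X a (inhabitedF X t))))"
proof -
  obtain N where N: "\<forall>m\<in>{a, X, t}. m < N"
    by (meson obtain_fresh finite.emptyI finite.insertI)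
  let ?e = N and ?c = "N + 1"
  let ?goal = "Ex a (Conj (BEx X a (emptyF X t)) (BEx X a (inhabitedF X t)))"
  let ?c_def = "Conj (Mem ?e ?c) (Mem ?e ?c)" and ?a_def = "Conj (Mem ?e a) (Mem ?c a)"
  have empty: "prov T (Ex ?e (emptyF ?e t))"
    using N by (intro empty_set_exists) auto
  have pair_c: "prov T (Ex ?c ?c_def)" and pair_a: "prov T (Ex a ?a_def)"
    using N by (auto intro: pair_exists)
  let ?\<Gamma> = "[?a_def, ?c_def, emptyF ?e t]"
  have a: "entails T ?\<Gamma> ?a_def" and c: "entails T ?\<Gamma> ?c_def"
    by (simp_all add: entails_assume)
  have "entails T ?\<Gamma> (BEx X a (emptyF X t))"
    by (rule entails_bexI[OF entails_conjD1[OF a]])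
      (use N assms in \<open>auto simp: emptyF_def rn_def entails_assume\<close>)
  moreover have "entails T ?\<Gamma> (inhabitedF ?c t)"
    unfolding inhabitedF_def
    by (rule entails_bexI[OF entails_conjD1[OF c]]) (use N in \<open>auto intro: entails_theorem prov_Top\<close>)
  then have "entails T ?\<Gamma> (BEx X a (inhabitedF X t))"
    by (intro entails_bexI[OF entails_conjD2[OF a]])
      (use N assms in \<open>auto simp: inhabitedF_def rn_def\<close>)
  ultimately have "entails T ?\<Gamma> ?goal"
    using entails_exI[where y = a] by (simp add: entails_conjI)
  with pair_a have "entails T [?c_def, emptyF ?e t] ?goal"
    by (rule entails_exE[OF entails_theorem]) (use N in \<open>auto simp: emptyF_def inhabitedF_def\<close>)
  with pair_c have "entails T [emptyF ?e t] ?goal"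
    by (rule entails_exE[OF entails_theorem]) (use N in \<open>auto simp: emptyF_def inhabitedF_def\<close>)
  with empty show ?thesis
    by (rule prov_of_entails[OF entails_exE[OF entails_theorem]])
      (use N in \<open>auto simp: emptyF_def inhabitedF_def\<close>)
qed

end

section \<open>\<open>\<Delta>\<^sub>0\<close> Uniformity implies \<open>\<Pi>\<close> Persistence\<close>

text \<open>Choosing \<open>X\<close> uniformly from a set with an empty and an inhabited element fixes
  one disjunct of \<open>selectF X t p q\<close> for all values of the other variables.\<close>

definition selectF :: "nat \<Rightarrow> nat \<Rightarrow> fm \<Rightarrow> fm \<Rightarrow> fm" where
  "selectF X t p q = Disj (Conj (emptyF X t) p) (Conj (inhabitedF X t) q)"

lemma fv_selectF [simp]: "t \<noteq> X \<Longrightarrow> fv (selectF X t p q) = insert X (fv p \<union> fv q)"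
  by (auto simp: emptyF_def inhabitedF_def selectF_def)

lemma Delta0_selectF: "t \<noteq> X \<Longrightarrow> Delta0 p \<Longrightarrow> Delta0 q \<Longrightarrow> Delta0 (selectF X t p q)"
  unfolding selectF_def emptyF_def inhabitedF_def by (intro Delta0.intros Delta0_Top) auto

lemma entails_emptyF_inhabitedF:
  assumes "entails T \<Gamma> (emptyF X t)" and "entails T \<Gamma> (inhabitedF X t)"
    and "t \<noteq> X" and "\<forall>q\<in>set \<Gamma>. t \<notin> fv q"
  shows "entails T \<Gamma> r"
proof -
  have "entails T (Top # Mem t X # \<Gamma>) (emptyF X t)"
    using assms(1) by (rule entails_mono) auto
  then have "entails T (Top # Mem t X # \<Gamma>) Bot"
    unfolding emptyF_def by (rule entails_bspec) (simp_all add: entails_assume assms(3))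
  then have "entails T \<Gamma> Bot"
    by (rule entails_bexE[OF assms(2)[unfolded inhabitedF_def]]) (use assms(3,4) in auto)
  then show ?thesis
    by (rule entails_botE)
qed

lemma entails_selectF_split:
  assumes "entails T \<Gamma> (All Y (selectF X t p q))"
    and "\<forall>r\<in>set \<Gamma>. Y \<notin> fv r \<and> t \<notin> fv r" and "t \<notin> fv p" and "t \<notin> fv q"
    and "Y \<noteq> X" and "t \<noteq> X"
  shows "entails T \<Gamma> (Disj (All Y p) (All Y q))"
proof -
  have select: "entails T \<Delta> (selectF X t p q)" if "set \<Gamma> \<subseteq> set \<Delta>" for \<Delta>
    using entails_mono[OF entails_spec[OF assms(1)] that] .
  have cases: "entails T \<Gamma> (Disj (emptyF X t) (inhabitedF X t))"
  proof (rule entails_disjE[OF select[of \<Gamma>, unfolded selectF_def]])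
    show "entails T (Conj (emptyF X t) p # \<Gamma>) (Disj (emptyF X t) (inhabitedF X t))"
      by (rule entails_disjI1[OF entails_conjD1[OF entails_assume[of "Conj (emptyF X t) p"]]]) simp
    show "entails T (Conj (inhabitedF X t) q # \<Gamma>) (Disj (emptyF X t) (inhabitedF X t))"
      by (rule entails_disjI2[OF entails_conjD1[OF entails_assume[of "Conj (inhabitedF X t) q"]]]) simp
  qed simp
  have empty: "entails T (emptyF X t # \<Gamma>) p"
  proof (rule entails_disjE[OF select[of "emptyF X t # \<Gamma>", unfolded selectF_def]])
    show "entails T (Conj (emptyF X t) p # emptyF X t # \<Gamma>) p"
      by (rule entails_conjD2[OF entails_assume[of "Conj (emptyF X t) p"]]) simp
    show "entails T (Conj (inhabitedF X t) q # emptyF X t # \<Gamma>) p"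
      by (rule entails_emptyF_inhabitedF[OF entails_assume
            entails_conjD1[OF entails_assume[of "Conj (inhabitedF X t) q"]]])
        (use assms in auto)
  qed auto
  have inhabited: "entails T (inhabitedF X t # \<Gamma>) q"
  proof (rule entails_disjE[OF select[of "inhabitedF X t # \<Gamma>", unfolded selectF_def]])
    show "entails T (Conj (emptyF X t) p # inhabitedF X t # \<Gamma>) q"
      by (rule entails_emptyF_inhabitedF[OF
            entails_conjD1[OF entails_assume[of "Conj (emptyF X t) p"]] entails_assume])
        (use assms in auto)
    show "entails T (Conj (inhabitedF X t) q # inhabitedF X t # \<Gamma>) q"
      by (rule entails_conjD2[OF entails_assume[of "Conj (inhabitedF X t) q"]]) simp
  qed auto
  show ?thesis
  proof (rule entails_disjE[OF cases])
    show "entails T (emptyF X t # \<Gamma>) (Disj (All Y p) (All Y q))"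
      by (rule entails_disjI1[OF entails_allI[OF empty]]) (use assms in auto)
    show "entails T (inhabitedF X t # \<Gamma>) (Disj (All Y p) (All Y q))"
      by (rule entails_disjI2[OF entails_allI[OF inhabited]]) (use assms in auto)
  qed
qed

lemma entails_rel_antimono_union:
  assumes "entails T \<Gamma> (BAll v B (BAll w v (Mem w U)))" and "entails T \<Gamma> (Mem Y B)"
    and "entails T \<Gamma> (rel U p)" and "PiF p" and "U \<notin> vars p" and "Y \<notin> vars p"
    and "distinct [B, U, v, w]" and "w \<noteq> Y"
  shows "entails T \<Gamma> (rel Y p)"
proof -
  have "entails T \<Gamma> (subst (BAll w v (Mem w U)) v Y)"
    by (rule entails_ballE[OF assms(1,2)]) (use assms(7,8) in auto)
  then have "entails T \<Gamma> (BAll w Y (Mem w U))"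
    using assms(7,8) by (simp add: rn_def)
  then show ?thesis
    by (rule entails_rel_antimono[OF _ assms(3,4,6,5)]) (use assms(7,8) in auto)
qed

lemma entails_selectF_witness:
  assumes "entails T \<Gamma> (Disj (rel U p) (rel U q))"
    and "entails T \<Gamma> (BEx X a (emptyF X t))" and "entails T \<Gamma> (BEx X a (inhabitedF X t))"
    and "entails T \<Gamma> (BAll v B (BAll w v (Mem w U)))"
    and "PiF p" and "PiF q" and "\<forall>m\<in>{X, Y, U}. m \<notin> vars p \<and> m \<notin> vars q"
    and "\<forall>r\<in>set \<Gamma>. X \<notin> fv r \<and> Y \<notin> fv r" and "distinct [X, Y, t, a, B, U, v, w]"
  shows "entails T \<Gamma> (BEx X a (BAll Y B (selectF X t (rel Y p) (rel Y q))))"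
proof -
  let ?\<chi> = "selectF X t (rel Y p) (rel Y q)"
  have branch: "entails T (rel U r # \<Gamma>) (BEx X a (BAll Y B ?\<chi>))"
    if r: "PiF r" "\<forall>m\<in>{X, Y, U}. m \<notin> vars r"
      and F: "entails T \<Gamma> (BEx X a F)" "fv F = {X}"
      and \<chi>: "\<And>\<Delta>. entails T \<Delta> F \<Longrightarrow> entails T \<Delta> (rel Y r) \<Longrightarrow> entails T \<Delta> ?\<chi>"
    for r F
  proof -
    let ?\<Delta> = "F # Mem X a # rel U r # \<Gamma>"
    have "entails T (Mem Y B # ?\<Delta>) (rel Y r)"
      by (rule entails_rel_antimono_union[where B = B and U = U and v = v and w = w])
        (use r assms(9) in \<open>auto intro: entails_assume entails_mono[OF assms(4)]\<close>)
    then have "entails T (Mem Y B # ?\<Delta>) ?\<chi>"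
      by (rule \<chi>[OF entails_assume, rotated]) simp
    then have "entails T ?\<Delta> (BAll Y B ?\<chi>)"
      by (rule entails_ballI) (use r F assms(8,9) in auto)
    then have "entails T ?\<Delta> (BEx X a (BAll Y B ?\<chi>))"
      by (rule entails_bexI_self) (use assms(9) in \<open>simp_all add: entails_assume\<close>)
    with entails_mono[OF F(1)] show ?thesis
      by (rule entails_bexE) (use r F assms(8,9) in auto)
  qed
  show ?thesis
  proof (rule entails_disjE[OF assms(1)])
    show "entails T (rel U p # \<Gamma>) (BEx X a (BAll Y B ?\<chi>))"
      by (rule branch[OF _ _ assms(2)])
        (use assms(5,7,9) in \<open>auto simp: selectF_def intro: entails_disjI1 entails_conjI\<close>)
    show "entails T (rel U q # \<Gamma>) (BEx X a (BAll Y B ?\<chi>))"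
      by (rule branch[OF _ _ assms(3)])
        (use assms(6,7,9) in \<open>auto simp: selectF_def intro: entails_disjI2 entails_conjI\<close>)
  qed
qed

definition persistent :: "fm set \<Rightarrow> fm \<Rightarrow> bool" where
  "persistent T p \<longleftrightarrow> (\<forall>A. A \<notin> vars p \<longrightarrow> prov T (Imp (All A (rel A p)) p))"

lemma persistent_Delta0:
  assumes "Delta0 p"
  shows "persistent T p"
proof -
  have "prov T (Imp (All A p) p)" for A
    by (rule prov_imp_of_entails[OF entails_spec[OF entails_assume]]) simp
  then show ?thesis
    using assms by (simp add: persistent_def rel_Delta0)
qed

lemma persistent_Conj:
  assumes "persistent T p" and "persistent T q"
  shows "persistent T (Conj p q)"
  unfolding persistent_def
proof (intro allI impI)
  fix A
  assume A: "A \<notin> vars (Conj p q)"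
  let ?H = "All A (Conj (rel A p) (rel A q))"
  have H: "entails T [?H] (Conj (rel A p) (rel A q))"
    by (rule entails_spec[OF entails_assume]) simp
  have "entails T [?H] (All A (rel A p))" and "entails T [?H] (All A (rel A q))"
    by (auto intro!: entails_allI entails_conjD1[OF H] entails_conjD2[OF H])
  then have "entails T [?H] (Conj p q)"
    using assms A unfolding persistent_def by (auto intro: entails_conjI entails_mp_theorem)
  then show "prov T (Imp (All A (rel A (Conj p q))) (Conj p q))"
    by (simp add: prov_imp_of_entails)
qed

lemma persistent_BAll:
  assumes "x \<noteq> y" and "persistent T p"
  shows "persistent T (BAll x y p)"
  unfolding persistent_def
proof (intro allI impI)
  fix A
  assume A: "A \<notin> vars (BAll x y p)"
  let ?H = "All A (rel A (BAll x y p))"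
  let ?\<Gamma> = "[Mem x y, ?H]"
  have "entails T ?\<Gamma> (rel A (BAll x y p))"
    by (rule entails_spec[OF entails_assume]) simp
  then have "entails T ?\<Gamma> (rel A p)"
    using entails_bspec[of T ?\<Gamma> x y "rel A p"] assms by (simp add: entails_assume)
  then have "entails T ?\<Gamma> (All A (rel A p))"
    by (rule entails_allI) (use A in auto)
  then have "entails T ?\<Gamma> p"
    using assms(2) A unfolding persistent_def by (auto intro: entails_mp_theorem)
  then have "entails T [?H] (BAll x y p)"
    by (rule entails_ballI) (use assms A in auto)
  then show "prov T (Imp ?H (BAll x y p))"
    by (rule prov_imp_of_entails)
qed

lemma (in basic_set_theory) persistent_All:
  assumes "PiF p" and "persistent T p"
  shows "persistent T (All x p)"
  unfolding persistent_def
proof (intro allI impI)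
  fix A
  assume A: "A \<notin> vars (All x p)"
  obtain N where N: "\<forall>m\<in>{A, x} \<union> vars p. m < N"
    by (meson obtain_fresh finite_vars finite.emptyI finite.insertI finite_UnI)
  then have fresh: "m \<notin> vars p" if "N \<le> m" for m
    using that by auto
  let ?U = N and ?w = "N + 1"
  let ?H = "All A (rel A (All x p))" and ?S = "BAll ?w A (Mem ?w ?U)"
  have superset: "prov T (Ex ?U (Conj ?S (Mem x ?U)))"
    using A N by (intro superset_exists) auto
  let ?\<Gamma> = "[Conj ?S (Mem x ?U), ?H]"
  have S: "entails T ?\<Gamma> (Conj ?S (Mem x ?U))"
    by (simp add: entails_assume)
  have "entails T ?\<Gamma> (rel ?U (All x p))"
    by (rule entails_rel_inst[OF entails_assume]) (use A N fresh in auto)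
  then have "entails T ?\<Gamma> (rel ?U p)"
    using entails_bspec[OF _ entails_conjD2[OF S]] A N by simp
  then have "entails T ?\<Gamma> (rel A p)"
    by (rule entails_rel_antimono[OF entails_conjD1[OF S]]) (use assms A N fresh in auto)
  with superset have "entails T [?H] (rel A p)"
    by (rule entails_exE[OF entails_theorem]) (use A N fresh in auto)
  then have "entails T [?H] (All A (rel A p))"
    by (rule entails_allI) simp
  then have "entails T [?H] p"
    using assms(2) A unfolding persistent_def by (auto intro: entails_mp_theorem)
  then have "entails T [?H] (All x p)"
    by (rule entails_allI) simp
  then show "prov T (Imp ?H (All x p))"
    by (rule prov_imp_of_entails)
qed

locale Delta0_uniform_theory = basic_set_theory +
  assumes Delta0Uniformity_ax: "Delta0Uniformity \<subseteq> T"
begin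

lemma entails_Delta0_uniformity:
  assumes "entails T \<Gamma> (BEx x A (BAll y B p))" and "\<forall>q\<in>set \<Gamma>. B \<notin> fv q"
    and "Delta0 p" and "distinct [A, B, x, y]" and "B \<notin> fv p"
  shows "entails T \<Gamma> (BEx x A (All y p))"
proof -
  have "Imp (All B (BEx x A (BAll y B p))) (BEx x A (All y p)) \<in> T"
    using assms(3-5) Delta0Uniformity_ax
    unfolding Delta0Uniformity_def UniformitySchema_def by blast
  then show ?thesis
    using entails_allI[OF assms(1,2)] by (rule entails_mp_theorem[OF prov.ax])
qed

lemma persistent_BEx:
  assumes "x \<noteq> y" and "PiF p" and "persistent T p"
  shows "persistent T (BEx x y p)"
  unfolding persistent_def
proof (intro allI impI)
  fix A
  assume A: "A \<notin> vars (BEx x y p)"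
  obtain N where N: "\<forall>m\<in>{A, x, y} \<union> vars p. m < N"
    by (meson obtain_fresh finite_vars finite.emptyI finite.insertI finite_UnI)
  then have fresh: "m \<notin> vars p" if "N \<le> m" for m
    using that by auto
  let ?B = N and ?Y = "N + 1" and ?U = "N + 2" and ?v = "N + 3" and ?w = "N + 4"
  let ?H = "All A (rel A (BEx x y p))" and ?SU = "BAll ?v ?B (BAll ?w ?v (Mem ?w ?U))"
  have union: "prov T (Ex ?U ?SU)"
    by (intro union_exists) auto
  have "entails T [?SU, ?H] (rel ?U (BEx x y p))"
    by (rule entails_rel_inst[OF entails_assume]) (use A N fresh in auto)
  then have inst: "entails T [?SU, ?H] (BEx x y (rel ?U p))"
    by simp
  let ?\<Gamma> = "[rel ?U p, Mem x y, ?SU, ?H]"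
  have "entails T (Mem ?Y ?B # ?\<Gamma>) (rel ?Y p)"
    by (rule entails_rel_antimono_union[where B = ?B and U = ?U and v = ?v and w = ?w])
      (use assms N fresh in \<open>auto simp: entails_assume\<close>)
  then have "entails T ?\<Gamma> (BAll ?Y ?B (rel ?Y p))"
    by (rule entails_ballI) (use A N fresh in auto)
  then have "entails T ?\<Gamma> (BEx x y (BAll ?Y ?B (rel ?Y p)))"
    by (rule entails_bexI_self) (use assms in \<open>auto simp: entails_assume\<close>)
  with inst have "entails T [?SU, ?H] (BEx x y (BAll ?Y ?B (rel ?Y p)))"
    by (rule entails_bexE) (use assms A N fresh in auto)
  with union have "entails T [?H] (BEx x y (BAll ?Y ?B (rel ?Y p)))"
    by (rule entails_exE[OF entails_theorem]) (use A N fresh in auto)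
  then have uniform: "entails T [?H] (BEx x y (All ?Y (rel ?Y p)))"
    by (rule entails_Delta0_uniformity) (use assms A N fresh in \<open>auto intro: Delta0_rel\<close>)
  have "prov T (Imp (All ?Y (rel ?Y p)) p)"
    using assms(3) fresh unfolding persistent_def by simp
  then have "entails T [All ?Y (rel ?Y p), Mem x y, ?H] p"
    by (rule entails_mp_theorem) (simp add: entails_assume)
  then have "entails T [All ?Y (rel ?Y p), Mem x y, ?H] (BEx x y p)"
    by (rule entails_bexI_self) (use assms in \<open>auto simp: entails_assume\<close>)
  with uniform have "entails T [?H] (BEx x y p)"
    by (rule entails_bexE) (use assms A N fresh in auto)
  then show "prov T (Imp ?H (BEx x y p))"
    by (rule prov_imp_of_entails)
qed

lemma persistent_Disj:
  assumes "PiF p" and "PiF q" and "persistent T p" and "persistent T q"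
  shows "persistent T (Disj p q)"
  unfolding persistent_def
proof (intro allI impI)
  fix A
  assume A: "A \<notin> vars (Disj p q)"
  obtain N where N: "\<forall>m\<in>{A} \<union> vars p \<union> vars q. m < N"
    by (meson obtain_fresh finite_vars finite.emptyI finite.insertI finite_UnI)
  then have fresh: "m \<notin> vars p" "m \<notin> vars q" if "N \<le> m" for m
    using that by (auto dest: leD)
  let ?a = N and ?X = "N + 1" and ?t = "N + 2" and ?Y = "N + 3" and ?B = "N + 4"
    and ?U = "N + 5" and ?v = "N + 6" and ?w = "N + 7"
  let ?H = "All A (rel A (Disj p q))" and ?SU = "BAll ?v ?B (BAll ?w ?v (Mem ?w ?U))"
    and ?E = "Conj (BEx ?X ?a (emptyF ?X ?t)) (BEx ?X ?a (inhabitedF ?X ?t))"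
    and ?\<chi> = "selectF ?X ?t (rel ?Y p) (rel ?Y q)"
  have zero_one: "prov T (Ex ?a ?E)"
    by (intro zero_one_exists) auto
  have union: "prov T (Ex ?U ?SU)"
    by (intro union_exists) auto
  let ?\<Gamma> = "[?SU, ?E, ?H]"
  have "entails T ?\<Gamma> ?E"
    by (simp add: entails_assume)
  then have E: "entails T ?\<Gamma> (BEx ?X ?a (emptyF ?X ?t))"
    "entails T ?\<Gamma> (BEx ?X ?a (inhabitedF ?X ?t))"
    by (rule entails_conjD1, rule entails_conjD2)
  have "entails T ?\<Gamma> (rel ?U (Disj p q))"
    by (rule entails_rel_inst[OF entails_assume]) (use A N fresh in auto)
  then have "entails T ?\<Gamma> (Disj (rel ?U p) (rel ?U q))"
    by simp
  then have "entails T ?\<Gamma> (BEx ?X ?a (BAll ?Y ?B ?\<chi>))"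
    by (rule entails_selectF_witness[OF _ E, where v = ?v and w = ?w])
      (use assms A N fresh in \<open>auto simp: entails_assume\<close>)
  with union have "entails T [?E, ?H] (BEx ?X ?a (BAll ?Y ?B ?\<chi>))"
    by (rule entails_exE[OF entails_theorem]) (use A N fresh in auto)
  then have uniform: "entails T [?E, ?H] (BEx ?X ?a (All ?Y ?\<chi>))"
    by (rule entails_Delta0_uniformity)
      (use assms A N fresh in \<open>auto intro!: Delta0_rel Delta0_selectF\<close>)
  have IH: "prov T (Imp (All ?Y (rel ?Y p)) p)" "prov T (Imp (All ?Y (rel ?Y q)) q)"
    using assms(3,4) fresh unfolding persistent_def by simp_all
  let ?\<Delta> = "[All ?Y ?\<chi>, Mem ?X ?a, ?E, ?H]"
  have "entails T ?\<Delta> (Disj (All ?Y (rel ?Y p)) (All ?Y (rel ?Y q)))"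
    by (rule entails_selectF_split[OF entails_assume]) (use A N fresh in auto)
  then have "entails T ?\<Delta> (Disj p q)"
    using IH by (rule entails_disj_mono)
  with uniform have "entails T [?E, ?H] (Disj p q)"
    by (rule entails_bexE) (use A N fresh in auto)
  with zero_one have "entails T [?H] (Disj p q)"
    by (rule entails_exE[OF entails_theorem]) (use A N fresh in auto)
  then show "prov T (Imp ?H (Disj p q))"
    by (rule prov_imp_of_entails)
qed

end

lemma (in Delta0_uniform_theory) Pi_persistence:
  assumes "PiF p" and "A \<notin> vars p"
  shows "prov T (Imp (All A (rel A p)) p)"
proof -
  have "persistent T p"
    using assms(1)
    by (induction rule: PiF.induct)
      (auto intro: persistent_Delta0 persistent_Conj persistent_Disj persistent_All
        persistent_BAll persistent_BEx)
  then show ?thesis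
    using assms(2) unfolding persistent_def by blast
qed

lemma prov_of_derives: "prov S p \<Longrightarrow> derives T S \<Longrightarrow> prov T p"
  unfolding derives_def by (induction rule: prov.induct) (auto intro: prov.intros)

lemma derives_trans: "derives T S \<Longrightarrow> derives S R \<Longrightarrow> derives T R"
  unfolding derives_def[of S R] by (auto simp: derives_def intro: prov_of_derives)

lemma derives_subset: "S \<subseteq> T \<Longrightarrow> derives T S"
  unfolding derives_def by (auto intro: prov.ax)

lemma derives_Un: "derives T S \<Longrightarrow> derives T R \<Longrightarrow> derives T (S \<union> R)"
  unfolding derives_def by blast

lemma Delta0Uniformity_subset_PiUniformity: "Delta0Uniformity \<subseteq> PiUniformity"
  unfolding Delta0Uniformity_def PiUniformity_def UniformitySchema_def
  by (auto intro: PiF.intros)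

lemma PiPersistence_derives_PiUniformity:
  "derives (IKP_minus_Bounding \<union> PiPersistence) PiUniformity"
  unfolding derives_def PiUniformity_def UniformitySchema_def
  by (auto intro!: Pi_uniformity_of_persistence)

lemma Delta0Uniformity_derives_PiPersistence:
  "derives (IKP_minus_Bounding \<union> Delta0Uniformity) PiPersistence"
proof -
  interpret Delta0_uniform_theory "IKP_minus_Bounding \<union> Delta0Uniformity"
    by unfold_locales (auto simp: IKP_minus_Bounding_def)
  show ?thesis
    unfolding derives_def PiPersistence_def by (auto intro: Pi_persistence)
qed

theorem mainTheorem1:
  shows "derives (IKP_minus_Bounding \<union> PiPersistence) PiUniformity
       \<and> derives (IKP_minus_Bounding \<union> PiPersistence) Delta0Uniformity
       \<and> derives (IKP_minus_Bounding \<union> PiUniformity) PiPersistence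
       \<and> derives (IKP_minus_Bounding \<union> PiUniformity) Delta0Uniformity
       \<and> derives (IKP_minus_Bounding \<union> Delta0Uniformity) PiPersistence
       \<and> derives (IKP_minus_Bounding \<union> Delta0Uniformity) PiUniformity"
proof -
  let ?IKP = IKP_minus_Bounding
  have PiP_PiU: "derives (?IKP \<union> PiPersistence) PiUniformity"
    by (rule PiPersistence_derives_PiUniformity)
  have \<Delta>U_PiP: "derives (?IKP \<union> Delta0Uniformity) PiPersistence"
    by (rule Delta0Uniformity_derives_PiPersistence)
  have PiU_\<Delta>U: "derives (?IKP \<union> PiUniformity) (?IKP \<union> Delta0Uniformity)"
    using Delta0Uniformity_subset_PiUniformity by (auto intro: derives_subset)
  have \<Delta>U_PiP': "derives (?IKP \<union> Delta0Uniformity) (?IKP \<union> PiPersistence)"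
    using \<Delta>U_PiP by (auto intro: derives_Un derives_subset)
  show ?thesis
    using PiP_PiU \<Delta>U_PiP PiU_\<Delta>U Delta0Uniformity_subset_PiUniformity
      derives_trans[OF PiU_\<Delta>U \<Delta>U_PiP] derives_trans[OF \<Delta>U_PiP' PiP_PiU]
    by (auto simp: derives_def)
qed

end
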